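(* Let $H$ be a real Hilbert space with inner product $\langle\cdot,\cdot\rangle$ and norm $|\cdot|$, and let $A_1:D(A_1)\subset H\to H$, $A_2:D(A_2)\subset H\to H$ be densely defined closed linear operators with $A_i=A_i^*$ and $\langle A_iu,u\rangle\ge \omega_i|u|^2$ for all $u\in D(A_i)$ ($i=1,2$), for some $\omega_1,\omega_2>0$. Then the following are equivalent: (a) $D(A_2)\subset D(A_1^{1/2})$ and there is $c>0$ with $|A_1^{1/2}u|\le c|A_2u|$ for all $u\in D(A_2)$; (b) $A_1^{1/2}A_2^{-1}$ is a bounded linear operator on $H$; (c) there is $c>0$ such that $|\langle A_1u,v\rangle|\le c\,|A_2v|\,\langle A_1u,u\rangle^{1/2}$ for all $u\in D(A_1)$ and all $v\in D(A_2)$.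
   Context: $A_1^{1/2}$ denotes the (self-adjoint, positive) square root of $A_1$, with domain $D(A_1^{1/2})$. *)

theory Defs
  imports "HOL-Analysis.Analysis"
begin

text \<open>A (possibly unbounded) linear operator on a real Hilbert space 'a is given by
a domain D :: 'a set and a map A :: 'a => 'a (only its values on D matter).\<close>

definition lin_op :: "'a::real_inner set \<Rightarrow> ('a \<Rightarrow> 'a) \<Rightarrow> bool" where
  "lin_op D A \<longleftrightarrow> subspace D \<and>
     (\<forall>x\<in>D. \<forall>y\<in>D. A (x + y) = A x + A y) \<and>
     (\<forall>c. \<forall>x\<in>D. A (c *\<^sub>R x) = c *\<^sub>R A x)"

definition densely_defined :: "'a::real_inner set \<Rightarrow> bool" where
  "densely_defined D \<longleftrightarrow> closure D = UNIV"

definition closed_op :: "'a::real_inner set \<Rightarrow> ('a \<Rightarrow> 'a) \<Rightarrow> bool" where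
  "closed_op D A \<longleftrightarrow> closed {(x, A x) | x. x \<in> D}"

definition adj_dom :: "'a::real_inner set \<Rightarrow> ('a \<Rightarrow> 'a) \<Rightarrow> 'a set" where
  "adj_dom D A = {v. \<exists>w. \<forall>u\<in>D. inner (A u) v = inner u w}"

text \<open>A = A*: same domain and A* v = A v (the representing vector is unique by density).\<close>
definition self_adjoint :: "'a::real_inner set \<Rightarrow> ('a \<Rightarrow> 'a) \<Rightarrow> bool" where
  "self_adjoint D A \<longleftrightarrow> adj_dom D A = D \<and>
     (\<forall>u\<in>D. \<forall>v\<in>D. inner (A u) v = inner u (A v))"

text \<open>The positive self-adjoint square root (S restricted to be 0 outside its domain,
so that it is uniquely determined as a pair).\<close>
definition is_sqrt_op :: "'a::real_inner set \<Rightarrow> ('a \<Rightarrow> 'a) \<Rightarrow> 'a set \<Rightarrow> ('a \<Rightarrow> 'a) \<Rightarrow> bool" where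
  "is_sqrt_op D A DS S \<longleftrightarrow> lin_op DS S \<and> densely_defined DS \<and> closed_op DS S \<and>
     self_adjoint DS S \<and> (\<forall>u\<in>DS. inner (S u) u \<ge> 0) \<and> (\<forall>u. u \<notin> DS \<longrightarrow> S u = 0) \<and>
     {u \<in> DS. S u \<in> DS} = D \<and> (\<forall>u\<in>D. S (S u) = A u)"

definition sqrt_pair :: "'a::real_inner set \<Rightarrow> ('a \<Rightarrow> 'a) \<Rightarrow> 'a set \<times> ('a \<Rightarrow> 'a)" where
  "sqrt_pair D A = (THE p. is_sqrt_op D A (fst p) (snd p))"

definition sqrt_dom :: "'a::real_inner set \<Rightarrow> ('a \<Rightarrow> 'a) \<Rightarrow> 'a set" where
  "sqrt_dom D A = fst (sqrt_pair D A)"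

definition sqrt_op :: "'a::real_inner set \<Rightarrow> ('a \<Rightarrow> 'a) \<Rightarrow> 'a \<Rightarrow> 'a" where
  "sqrt_op D A = snd (sqrt_pair D A)"

end

(*
  For a coercive self-adjoint A the bounded operator A^-1 satisfies 0 < w A^-1 <= I, so
  P = I - w A^-1 is a symmetric contraction, and the binomial series of sqrt (1 - t), which
  converges absolutely at t = 1, yields a nonnegative square root R = sqrt (I - P) / sqrt w of
  A^-1.  Nonnegative bounded square roots are unique, so A^(1/2) is the inverse of R and
  D(A^(1/2)) is the range of R.

  Writing u = R1 (R1 y) for u in D(A1), condition (c) says |<y, v>| <= c |A2 v| |R1 y| for all y.
  By the Riesz representation on the dense range of R1 this holds exactly when v = R1 w with
  |w| <= c |A2 v|, which is (a).  The equivalence of (a) and (b) is the substitution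
  u = A2^-1 x.
*)

theory Submission
  imports Defs "HOL-Computational_Algebra.Formal_Power_Series"
begin

section \<open>Hilbert space preliminaries\<close>

lemma summable_of_summable_norm:
  fixes f :: "nat \<Rightarrow> 'a::{real_normed_vector,complete_space}"
  assumes "summable (\<lambda>n. norm (f n))"
  shows "summable f"
proof -
  have norms: "Cauchy (\<lambda>n. \<Sum>k<n. norm (f k))"
    using assms by (simp add: summable_iff_convergent Cauchy_convergent_iff)
  have dist_le: "dist (\<Sum>k<m. f k) (\<Sum>k<n. f k) \<le> dist (\<Sum>k<m. norm (f k)) (\<Sum>k<n. norm (f k))"
    if "m \<le> n" for m n
  proof -
    have split: "(\<Sum>k<n. g k) = (\<Sum>k<m. g k) + (\<Sum>k\<in>{m..<n}. g k)" for g :: "nat \<Rightarrow> 'b::comm_monoid_add"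
      using sum.atLeastLessThan_concat[of 0 m n g] that by (simp add: atLeast0LessThan)
    have "dist (\<Sum>k<m. f k) (\<Sum>k<n. f k) = norm (\<Sum>k\<in>{m..<n}. f k)"
      unfolding dist_norm split[of f] by (simp add: norm_minus_cancel)
    also have "\<dots> \<le> (\<Sum>k\<in>{m..<n}. norm (f k))"
      by (rule norm_sum)
    also have "\<dots> = dist (\<Sum>k<m. norm (f k)) (\<Sum>k<n. norm (f k))"
      unfolding dist_real_def split[of "\<lambda>k. norm (f k)"] by (simp add: sum_nonneg)
    finally show ?thesis .
  qed
  have "Cauchy (\<lambda>n. \<Sum>k<n. f k)"
  proof (rule metric_CauchyI)
    fix e :: real assume "e > 0"
    then obtain N where N: "\<And>m n. m \<ge> N \<Longrightarrow> n \<ge> N \<Longrightarrow>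
        dist (\<Sum>k<m. norm (f k)) (\<Sum>k<n. norm (f k)) < e"
      using metric_CauchyD[OF norms] by blast
    have "dist (\<Sum>k<m. f k) (\<Sum>k<n. f k) < e" if "m \<ge> N" "n \<ge> N" for m n
    proof (cases "m \<le> n")
      case True
      then show ?thesis using dist_le[OF True] N[OF that] by linarith
    next
      case False
      then show ?thesis using dist_le[of n m] N[OF that(2,1)] by (simp add: dist_commute)
    qed
    then show "\<exists>N. \<forall>m\<ge>N. \<forall>n\<ge>N. dist (\<Sum>k<m. f k) (\<Sum>k<n. f k) < e"
      by blast
  qed
  then show ?thesis
    by (simp add: summable_iff_convergent Cauchy_convergent_iff)
qed

lemma parallelogram_law:
  fixes a b :: "'a::real_inner"
  shows "(norm (a + b))\<^sup>2 + (norm (a - b))\<^sup>2 = 2 * (norm a)\<^sup>2 + 2 * (norm b)\<^sup>2"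
  by (simp add: power2_norm_eq_inner inner_add_left inner_add_right inner_diff_left
      inner_diff_right inner_commute)

lemma Cauchy_minimizing_sequence:
  fixes M :: "'a::real_inner set"
  assumes sub: "subspace M" and sM: "\<And>n. s n \<in> M"
    and d_le: "\<And>m. m \<in> M \<Longrightarrow> d \<le> norm (x - m)" and lim: "(\<lambda>n. norm (x - s n)) \<longlonglongrightarrow> d"
  shows "Cauchy s"
proof -
  define e where "e = (\<lambda>n. (norm (x - s n))\<^sup>2 - d\<^sup>2)"
  have e_lim: "e \<longlonglongrightarrow> 0"
    using tendsto_diff[OF tendsto_power[OF lim] tendsto_const, of 2 "d\<^sup>2"] by (simp add: e_def)
  have "d \<ge> 0"
    using lim by (rule LIMSEQ_le_const) simp
  \<comment> \<open>The midpoint of two points of the subspace is again at distance at least d from x.\<close>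
  have close: "(norm (s n - s k))\<^sup>2 \<le> 2 * e n + 2 * e k" for n k
  proof -
    have "(s n + s k) /\<^sub>R 2 \<in> M"
      using sub sM by (simp add: subspace_add subspace_scale)
    moreover have "(x - s n) + (x - s k) = 2 *\<^sub>R (x - (s n + s k) /\<^sub>R 2)"
      by (simp add: algebra_simps scaleR_2)
    ultimately have "2 * d \<le> norm ((x - s n) + (x - s k))"
      using d_le by simp
    then have "4 * d\<^sup>2 \<le> (norm ((x - s n) + (x - s k)))\<^sup>2"
      using \<open>d \<ge> 0\<close> power_mono[of "2 * d" _ 2] by (simp add: power_mult_distrib)
    moreover have "(norm ((x - s n) - (x - s k)))\<^sup>2 = (norm (s n - s k))\<^sup>2"
      by (simp add: norm_minus_commute)
    ultimately show ?thesis
      using parallelogram_law[of "x - s n" "x - s k"] unfolding e_def by argo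
  qed
  show "Cauchy s"
  proof (rule metric_CauchyI)
    fix r :: real assume "r > 0"
    then obtain N where N: "\<And>n. n \<ge> N \<Longrightarrow> e n < r\<^sup>2 / 4"
      using order_tendstoD(2)[OF e_lim, of "r\<^sup>2 / 4"] by (auto simp: eventually_sequentially)
    have "dist (s m) (s n) < r" if "m \<ge> N" "n \<ge> N" for m n
    proof -
      have "(norm (s m - s n))\<^sup>2 < r\<^sup>2"
        using close[of m n] N[OF that(1)] N[OF that(2)] by linarith
      then show ?thesis
        using \<open>r > 0\<close> by (simp add: dist_norm power_less_imp_less_base)
    qed
    then show "\<exists>N. \<forall>m\<ge>N. \<forall>n\<ge>N. dist (s m) (s n) < r" by blast
  qed
qed

lemma nearest_point_in_closed_subspace:
  fixes M :: "'a::{real_inner,complete_space} set"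
  assumes sub: "subspace M" and cl: "closed M"
  obtains p where "p \<in> M" "\<And>m. m \<in> M \<Longrightarrow> norm (x - p) \<le> norm (x - m)"
proof -
  define d where "d = infdist x M"
  have d_le: "d \<le> norm (x - m)" if "m \<in> M" for m
    using that unfolding d_def by (metis dist_norm infdist_le)
  have "\<exists>m\<in>M. norm (x - m) < d + 1 / Suc n" for n
  proof -
    have "M \<noteq> {}"
      using subspace_0[OF sub] by blast
    moreover have "bdd_below (dist x ` M)"
      by (rule bdd_belowI[of _ 0]) auto
    moreover have "(INF m\<in>M. dist x m) < d + 1 / Suc n"
      using \<open>M \<noteq> {}\<close> by (simp add: d_def infdist_notempty)
    ultimately show ?thesis
      by (simp add: cINF_less_iff dist_norm)
  qed
  then obtain s where sM: "\<And>n. s n \<in> M" and s_lt: "\<And>n. norm (x - s n) < d + 1 / Suc n"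
    by metis
  have "(\<lambda>n. d + 1 / real (Suc n)) \<longlonglongrightarrow> d + 0"
    using LIMSEQ_inverse_real_of_nat by (intro tendsto_add tendsto_const) (simp add: inverse_eq_divide)
  have lim: "(\<lambda>n. norm (x - s n)) \<longlonglongrightarrow> d"
  proof (rule tendsto_sandwich[OF _ _ tendsto_const])
    show "\<forall>\<^sub>F n in sequentially. d \<le> norm (x - s n)"
      using d_le[OF sM] by simp
    show "\<forall>\<^sub>F n in sequentially. norm (x - s n) \<le> d + 1 / real (Suc n)"
      using s_lt by (simp add: less_imp_le)
    show "(\<lambda>n. d + 1 / real (Suc n)) \<longlonglongrightarrow> d"
      using \<open>(\<lambda>n. d + 1 / real (Suc n)) \<longlonglongrightarrow> d + 0\<close> by simp
  qed
  obtain p where "s \<longlonglongrightarrow> p"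
    using Cauchy_minimizing_sequence[OF sub sM d_le lim] Cauchy_convergent_iff convergent_def by blast
  moreover have "p \<in> M"
    using cl sM \<open>s \<longlonglongrightarrow> p\<close> by (rule closed_sequentially)
  moreover have "norm (x - p) = d"
    using \<open>s \<longlonglongrightarrow> p\<close> lim by (intro LIMSEQ_unique[OF _ lim] tendsto_intros)
  ultimately show ?thesis
    using d_le by (intro that[of p]) auto
qed

lemma nearest_point_orthogonal:
  fixes M :: "'a::real_inner set"
  assumes sub: "subspace M" and p: "p \<in> M"
    and nearest: "\<And>m. m \<in> M \<Longrightarrow> norm (x - p) \<le> norm (x - m)" and m: "m \<in> M"
  shows "inner (x - p) m = 0"
proof (rule ccontr)
  assume nz: "inner (x - p) m \<noteq> 0"
  then have mm: "inner m m > 0"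
    by (metis inner_gt_zero_iff inner_zero_right)
  define a where "a = x - p"
  define t where "t = inner a m / inner m m"
  have "p + t *\<^sub>R m \<in> M"
    using sub p m by (simp add: subspace_add subspace_scale)
  then have "norm a \<le> norm (a - t *\<^sub>R m)"
    using nearest by (simp add: a_def diff_diff_eq)
  then have "(norm a)\<^sup>2 \<le> (norm (a - t *\<^sub>R m))\<^sup>2"
    by (simp add: power_mono)
  also have "\<dots> = (norm a)\<^sup>2 - 2 * t * inner a m + t\<^sup>2 * inner m m"
    unfolding power2_norm_eq_inner
    by (simp add: inner_diff_left inner_diff_right inner_commute[of m a] power2_eq_square)
      (simp add: right_diff_distrib)
  also have "\<dots> = (norm a)\<^sup>2 - (inner a m)\<^sup>2 / inner m m"
    using mm by (simp add: t_def power2_eq_square field_simps)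
  finally have "(inner a m)\<^sup>2 / inner m m \<le> 0"
    by simp
  moreover have "(inner a m)\<^sup>2 / inner m m > 0"
    using nz mm by (simp add: a_def)
  ultimately show False
    by simp
qed

lemma orthogonal_projection_exists:
  fixes M :: "'a::{real_inner,complete_space} set"
  assumes "subspace M" "closed M"
  obtains p where "p \<in> M" "\<And>m. m \<in> M \<Longrightarrow> inner (x - p) m = 0"
  by (metis assms nearest_point_in_closed_subspace nearest_point_orthogonal)

lemma subspace_closure:
  fixes M :: "'a::real_normed_vector set"
  assumes "subspace M"
  shows "subspace (closure M)"
  unfolding subspace_def
proof (intro conjI ballI allI)
  show "0 \<in> closure M"
    using assms subspace_0 closure_subset by blast
next
  fix x y assume "x \<in> closure M" "y \<in> closure M"
  then obtain a b where "\<And>n. a n \<in> M" "a \<longlonglongrightarrow> x" "\<And>n. b n \<in> M" "b \<longlonglongrightarrow> y"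
    unfolding closure_sequential by blast
  then show "x + y \<in> closure M"
    unfolding closure_sequential
    by (intro exI[of _ "\<lambda>n. a n + b n"]) (auto intro: tendsto_add simp: assms subspace_add)
next
  fix c :: real and x assume "x \<in> closure M"
  then obtain a where "\<And>n. a n \<in> M" "a \<longlonglongrightarrow> x"
    unfolding closure_sequential by blast
  then show "c *\<^sub>R x \<in> closure M"
    unfolding closure_sequential
    by (intro exI[of _ "\<lambda>n. c *\<^sub>R a n"]) (auto intro: tendsto_scaleR simp: assms subspace_scale)
qed

lemma dense_if_orthogonal_trivial:
  fixes M :: "'a::{real_inner,complete_space} set"
  assumes "subspace M" "\<And>x. (\<And>m. m \<in> M \<Longrightarrow> inner x m = 0) \<Longrightarrow> x = 0"
  shows "closure M = UNIV"
proof -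
  have "x \<in> closure M" for x
  proof -
    obtain p where "p \<in> closure M" "\<And>m. m \<in> closure M \<Longrightarrow> inner (x - p) m = 0"
      using orthogonal_projection_exists[OF subspace_closure[OF assms(1)] closed_closure] by blast
    then show ?thesis
      using assms(2)[of "x - p"] closure_subset by auto
  qed
  then show ?thesis by auto
qed

lemma norm_le_if_inner_bounded_on_dense:
  fixes w :: "'a::real_inner"
  assumes "closure M = UNIV" "\<And>z. z \<in> M \<Longrightarrow> \<bar>inner z w\<bar> \<le> K * norm z" "K \<ge> 0"
  shows "norm w \<le> K"
proof -
  have "closure M \<subseteq> {z. \<bar>inner z w\<bar> \<le> K * norm z}"
    using assms(2) by (intro closure_minimal closed_Collect_le continuous_intros) auto
  then have "\<bar>inner w w\<bar> \<le> K * norm w"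
    using assms(1) by blast
  then have "norm w * norm w \<le> K * norm w"
    by (simp add: dot_square_norm power2_eq_square)
  then show ?thesis
    using assms(3) by (cases "w = 0") auto
qed

lemma not_in_closure_kernel:
  fixes \<phi> :: "'a::real_normed_vector \<Rightarrow> real"
  assumes sub: "subspace M"
    and diff: "\<And>x y. x \<in> M \<Longrightarrow> y \<in> M \<Longrightarrow> \<phi> (x - y) = \<phi> x - \<phi> y"
    and bounded: "\<And>x. x \<in> M \<Longrightarrow> \<bar>\<phi> x\<bar> \<le> K * norm x"
    and z: "z \<in> M" "\<phi> z \<noteq> 0"
  shows "z \<notin> closure {x \<in> M. \<phi> x = 0}"
proof
  assume "z \<in> closure {x \<in> M. \<phi> x = 0}"
  moreover have "\<bar>\<phi> z\<bar> / (\<bar>K\<bar> + 1) > 0"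
    using z(2) by (simp add: add_nonneg_pos)
  ultimately obtain a where a: "a \<in> M" "\<phi> a = 0" "dist a z < \<bar>\<phi> z\<bar> / (\<bar>K\<bar> + 1)"
    unfolding closure_approachable by blast
  have "\<bar>\<phi> z\<bar> = \<bar>\<phi> (z - a)\<bar>"
    using a z diff by simp
  also have "\<dots> \<le> K * norm (z - a)"
    using a z sub by (simp add: bounded subspace_diff)
  also have "\<dots> \<le> (\<bar>K\<bar> + 1) * dist a z"
    by (simp add: dist_norm norm_minus_commute mult_right_mono)
  also have "\<dots> < \<bar>\<phi> z\<bar>"
    using a(3) by (simp add: less_divide_eq mult.commute add_nonneg_pos)
  finally show False by simp
qed

lemma riesz_representation_subspace:
  fixes M :: "'a::{real_inner,complete_space} set" and \<phi> :: "'a \<Rightarrow> real"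
  assumes sub: "subspace M"
    and add: "\<And>x y. x \<in> M \<Longrightarrow> y \<in> M \<Longrightarrow> \<phi> (x + y) = \<phi> x + \<phi> y"
    and scale: "\<And>c x. x \<in> M \<Longrightarrow> \<phi> (c *\<^sub>R x) = c * \<phi> x"
    and bounded: "\<And>x. x \<in> M \<Longrightarrow> \<bar>\<phi> x\<bar> \<le> K * norm x"
  obtains w where "\<And>z. z \<in> M \<Longrightarrow> \<phi> z = inner z w"
proof (cases "\<forall>z\<in>M. \<phi> z = 0")
  case True
  then show ?thesis using that[of 0] by simp
next
  case False
  then obtain z1 where z1: "z1 \<in> M" "\<phi> z1 \<noteq> 0" by auto
  define z0 where "z0 = (1 / \<phi> z1) *\<^sub>R z1"
  have z0: "z0 \<in> M" "\<phi> z0 = 1"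
    using z1 sub by (auto simp: z0_def scale subspace_scale)
  have diff: "\<phi> (x - y) = \<phi> x - \<phi> y" if "x \<in> M" "y \<in> M" for x y
    using add[of x "- y"] scale[of y "-1"] that sub by (simp add: subspace_neg)
  define N where "N = {z \<in> M. \<phi> z = 0}"
  have "subspace N"
    unfolding N_def subspace_def
    using sub scale[of 0 0] add scale by (auto simp: subspace_0 subspace_add subspace_scale)
  then obtain q where q: "q \<in> closure N" "\<And>m. m \<in> closure N \<Longrightarrow> inner (z0 - q) m = 0"
    using orthogonal_projection_exists[OF subspace_closure closed_closure] by metis
  define p where "p = z0 - q"
  have "p \<noteq> 0"
    using not_in_closure_kernel[OF sub diff bounded z0(1)] z0(2) q(1) by (auto simp: p_def N_def)
  have p_orth: "inner p m = 0" if "m \<in> N" for m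
    using q closure_subset that by (auto simp: p_def)
  have "inner q p = 0"
    using q by (simp add: p_def inner_commute)
  then have p_z0: "inner p z0 = inner p p"
    by (simp add: p_def inner_diff_left inner_commute)
  have "\<phi> z = inner z ((1 / inner p p) *\<^sub>R p)" if z: "z \<in> M" for z
  proof -
    have "z - \<phi> z *\<^sub>R z0 \<in> N"
      using z z0 diff sub by (simp add: N_def scale subspace_diff subspace_scale)
    then have "inner p (z - \<phi> z *\<^sub>R z0) = 0"
      by (rule p_orth)
    then have "inner p z = \<phi> z * inner p p"
      using p_z0 by (simp add: inner_diff_right)
    then show ?thesis
      using \<open>p \<noteq> 0\<close> by (simp add: inner_commute)
  qed
  then show ?thesis using that by blast
qed

lemma nonneg_symmetric_inner_zero:
  fixes T :: "'a::real_inner \<Rightarrow> 'a"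
  assumes lin: "linear T" and sym: "\<And>x y. inner (T x) y = inner x (T y)"
    and nonneg: "\<And>x. inner (T x) x \<ge> 0" and zero: "inner (T y) y = 0"
  shows "T y = 0"
proof (rule ccontr)
  assume "T y \<noteq> 0"
  define b where "b = inner (T y) (T y)"
  define c where "c = inner (T (T y)) (T y)"
  define s where "s = b / (c + 1)"
  have "b > 0" "c \<ge> 0"
    using \<open>T y \<noteq> 0\<close> nonneg by (auto simp: b_def c_def)
  then have "s > 0" "s * c = b - s"
    by (auto simp: s_def field_simps)
  \<comment> \<open>Test nonnegativity at \<open>y - s T y\<close>, a quadratic in s with vanishing constant term.\<close>
  have "inner (T (y - s *\<^sub>R T y)) (y - s *\<^sub>R T y) = - 2 * s * b + s\<^sup>2 * c"
    using zero sym[of "T y" y] lin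
    by (simp add: linear_diff linear_scale inner_diff_left inner_diff_right b_def c_def
        inner_commute[of y] power2_eq_square algebra_simps)
  also have "\<dots> = - s * (b + s)"
  proof -
    have "s\<^sup>2 * c = s * (b - s)"
      using \<open>s * c = b - s\<close> by (simp add: power2_eq_square mult.assoc)
    then show ?thesis
      by (simp add: algebra_simps)
  qed
  also have "\<dots> < 0"
    using \<open>s > 0\<close> \<open>b > 0\<close> by (simp add: mult_pos_pos)
  finally show False
    using nonneg by (simp add: not_le[symmetric])
qed

section \<open>The binomial series of \<open>sqrt (1 - t)\<close>\<close>

text \<open>Taylor coefficients of \<open>sqrt (1 - t) = (\<Sum>k. sqrt_coeff k * t ^ k)\<close>.\<close>

definition sqrt_coeff :: "nat \<Rightarrow> real" where
  "sqrt_coeff k = ((1/2) gchoose k) * (-1) ^ k"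

lemma sqrt_coeff_0 [simp]: "sqrt_coeff 0 = 1"
  by (simp add: sqrt_coeff_def)

lemma sqrt_coeff_pochhammer: "sqrt_coeff k = pochhammer (-1/2) k / fact k"
  by (simp add: sqrt_coeff_def gbinomial_pochhammer power_mult_distrib[symmetric])

lemma sqrt_coeff_nonpos:
  assumes "k > 0"
  shows "sqrt_coeff k \<le> 0"
proof -
  obtain j where "k = Suc j"
    using assms by (cases k) auto
  moreover have "pochhammer (1/2::real) j \<ge> 0"
    by (simp add: pochhammer_nonneg)
  ultimately show ?thesis
    by (simp add: sqrt_coeff_pochhammer pochhammer_rec divide_nonpos_pos)
qed

lemma abs_sqrt_coeff: "\<bar>sqrt_coeff k\<bar> = (if k = 0 then 2 else 0) - sqrt_coeff k"
  using sqrt_coeff_nonpos[of k] by auto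

lemma sum_sqrt_coeff_atMost: "(\<Sum>k\<le>n. sqrt_coeff k) = pochhammer (1/2) n / fact n"
  using gbinomial_sum_lower_neg[of "1/2::real" n]
  by (simp add: sqrt_coeff_def gbinomial_pochhammer power_mult_distrib[symmetric])

lemma sum_sqrt_coeff_nonneg: "(\<Sum>k<n. sqrt_coeff k) \<ge> 0"
proof (cases n)
  case (Suc m)
  then show ?thesis
    by (simp only: lessThan_Suc_atMost sum_sqrt_coeff_atMost) (simp add: pochhammer_nonneg)
qed simp

lemma sum_abs_sqrt_coeff_le: "(\<Sum>k<n. \<bar>sqrt_coeff k\<bar>) \<le> 2"
proof -
  have "(\<Sum>k<n. \<bar>sqrt_coeff k\<bar>) = (\<Sum>k<n. if k = 0 then 2 else 0) - (\<Sum>k<n. sqrt_coeff k)"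
    by (simp add: abs_sqrt_coeff sum_subtractf)
  also have "(\<Sum>k<n. if k = 0 then 2 else 0 :: real) \<le> 2"
    by (simp add: sum.delta')
  finally show ?thesis
    using sum_sqrt_coeff_nonneg[of n] by linarith
qed

lemma summable_abs_sqrt_coeff: "summable (\<lambda>k. \<bar>sqrt_coeff k\<bar>)"
  by (rule summableI_nonneg_bounded[where x = 2]) (auto simp: sum_abs_sqrt_coeff_le)

text \<open>The Cauchy square of the series is that of \<open>1 - t\<close> (Vandermonde's identity).\<close>

lemma sqrt_coeff_convolution:
  "(\<Sum>i\<le>k. sqrt_coeff i * sqrt_coeff (k - i)) = (if k = 0 then 1 else if k = 1 then -1 else 0)"
proof -
  have "(\<Sum>i\<le>k. sqrt_coeff i * sqrt_coeff (k - i))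
      = (\<Sum>i\<le>k. ((1/2::real) gchoose i) * ((1/2) gchoose (k - i))) * (-1) ^ k"
    unfolding sum_distrib_right
  proof (rule sum.cong)
    fix i assume "i \<in> {..k}"
    then have "(-1::real) ^ i * (-1) ^ (k - i) = (-1) ^ k"
      by (simp add: power_add[symmetric])
    then show "sqrt_coeff i * sqrt_coeff (k - i) = ((1/2) gchoose i) * ((1/2) gchoose (k - i)) * (-1) ^ k"
      unfolding sqrt_coeff_def by (metis (no_types, lifting) mult.assoc mult.left_commute)
  qed simp
  also have "(\<Sum>i\<le>k. ((1/2::real) gchoose i) * ((1/2) gchoose (k - i))) = of_nat (1 choose k)"
    using gbinomial_Vandermonde[of "1/2::real" "1/2" k] binomial_gbinomial[of 1 k, where 'a = real]
    by (simp add: atLeast0AtMost)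
  finally show ?thesis
    by (cases k) (auto simp: binomial_eq_0)
qed

section \<open>Power series in a contraction\<close>

locale contraction =
  fixes P :: "'a::{real_normed_vector,complete_space} \<Rightarrow> 'a"
  assumes bounded_linear: "bounded_linear P" and norm_le: "norm (P x) \<le> norm x"
begin

lemma bounded_linear_funpow: "bounded_linear (P ^^ k)"
  by (induction k) (simp_all add: bounded_linear_ident[unfolded id_def] id_def
      bounded_linear_compose[OF bounded_linear])

lemma norm_funpow_le: "norm ((P ^^ k) x) \<le> norm x"
  by (induction k) (auto intro: order_trans[OF norm_le])

definition power_series :: "(nat \<Rightarrow> real) \<Rightarrow> 'a \<Rightarrow> 'a" where
  "power_series a x = (\<Sum>k. a k *\<^sub>R (P ^^ k) x)"

definition partial_series :: "(nat \<Rightarrow> real) \<Rightarrow> nat \<Rightarrow> 'a \<Rightarrow> 'a" where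
  "partial_series a n x = (\<Sum>k<n. a k *\<^sub>R (P ^^ k) x)"

context
  fixes a :: "nat \<Rightarrow> real"
  assumes abs_summable: "summable (\<lambda>k. \<bar>a k\<bar>)"
begin

lemma summable_norm_terms: "summable (\<lambda>k. norm (a k *\<^sub>R (P ^^ k) x))"
  by (rule summable_comparison_test[OF _ summable_mult2[OF abs_summable, of "norm x"]])
    (auto intro!: mult_left_mono norm_funpow_le)

lemma power_series_sums: "(\<lambda>k. a k *\<^sub>R (P ^^ k) x) sums power_series a x"
  unfolding power_series_def
  by (rule summable_sums[OF summable_of_summable_norm[OF summable_norm_terms]])

lemma partial_series_tendsto: "(\<lambda>n. partial_series a n x) \<longlonglongrightarrow> power_series a x"
  using power_series_sums unfolding sums_def partial_series_def .

lemma norm_partial_series_le: "norm (partial_series a n x) \<le> (\<Sum>k. \<bar>a k\<bar>) * norm x"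
proof -
  have "norm (partial_series a n x) \<le> (\<Sum>k<n. \<bar>a k\<bar> * norm x)"
    unfolding partial_series_def
    by (rule order_trans[OF norm_sum sum_mono]) (simp add: mult_left_mono norm_funpow_le)
  also have "\<dots> \<le> (\<Sum>k. \<bar>a k\<bar>) * norm x"
    unfolding sum_distrib_right[symmetric]
    by (intro mult_right_mono sum_le_suminf abs_summable) auto
  finally show ?thesis .
qed

lemma norm_power_series_le: "norm (power_series a x) \<le> (\<Sum>k. \<bar>a k\<bar>) * norm x"
  by (rule LIMSEQ_le_const2[OF tendsto_norm[OF partial_series_tendsto]])
    (use norm_partial_series_le in blast)

lemma partial_series_diff: "partial_series a n (x - y) = partial_series a n x - partial_series a n y"
  unfolding partial_series_def
  using bounded_linear_funpow by (simp add: linear_diff bounded_linear.linear scaleR_diff_right sum_subtractf)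

lemma bounded_linear_power_series: "bounded_linear (power_series a)"
proof (rule bounded_linear_intro[where K = "\<Sum>k. \<bar>a k\<bar>"])
  show "power_series a (x + y) = power_series a x + power_series a y" for x y
  proof (rule sums_unique2[OF power_series_sums])
    show "(\<lambda>k. a k *\<^sub>R (P ^^ k) (x + y)) sums (power_series a x + power_series a y)"
      using sums_add[OF power_series_sums[of x] power_series_sums[of y]] bounded_linear_funpow
      by (simp add: linear_add bounded_linear.linear scaleR_add_right)
  qed
  show "power_series a (c *\<^sub>R x) = c *\<^sub>R power_series a x" for c x
  proof (rule sums_unique2[OF power_series_sums])
    show "(\<lambda>k. a k *\<^sub>R (P ^^ k) (c *\<^sub>R x)) sums (c *\<^sub>R power_series a x)"
      using sums_scaleR_right[OF power_series_sums[of x], of c] bounded_linear_funpow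
      by (simp add: linear_scale bounded_linear.linear mult.commute)
  qed
  show "norm (power_series a x) \<le> norm x * (\<Sum>k. \<bar>a k\<bar>)" for x
    using norm_power_series_le by (simp add: mult.commute)
qed

lemma power_series_commute:
  assumes "bounded_linear C" "\<And>x. C (P x) = P (C x)"
  shows "C (power_series a x) = power_series a (C x)"
proof -
  have "C ((P ^^ k) y) = (P ^^ k) (C y)" for k y
    by (induction k) (simp_all add: assms(2))
  then show ?thesis
    using bounded_linear.sums[OF assms(1) power_series_sums, of x] power_series_sums[of "C x"]
    by (simp add: bounded_linear.linear[OF assms(1)] linear_scale sums_unique2)
qed

end

lemma partial_series_square:
  "partial_series a n (partial_series b n x) = (\<Sum>(i, j)\<in>{..<n} \<times> {..<n}. (a i * b j) *\<^sub>R (P ^^ (i + j)) x)"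
proof -
  have "(P ^^ i) (\<Sum>j<n. b j *\<^sub>R (P ^^ j) x) = (\<Sum>j<n. b j *\<^sub>R (P ^^ i) ((P ^^ j) x))" for i
    using bounded_linear_funpow[of i] by (simp add: bounded_linear.linear linear_sum linear_scale)
  then show ?thesis
    by (simp add: partial_series_def scaleR_sum_right funpow_add sum.cartesian_product)
qed

lemma partial_series_diagonal:
  "(\<Sum>k<n. (\<Sum>i\<le>k. a i * b (k - i)) *\<^sub>R (P ^^ k) x) = (\<Sum>(i, j)\<in>{(i, j). i + j < n}. (a i * b j) *\<^sub>R (P ^^ (i + j)) x)"
  by (simp add: sum.triangle_reindex scaleR_sum_left)

lemma partial_series_square_tendsto:
  assumes "summable (\<lambda>k. \<bar>a k\<bar>)" "summable (\<lambda>k. \<bar>b k\<bar>)"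
  shows "(\<lambda>n. partial_series a n (partial_series b n x)) \<longlonglongrightarrow> power_series a (power_series b x)"
proof -
  have "(\<lambda>n. norm (partial_series a n (partial_series b n x - power_series b x))) \<longlonglongrightarrow> 0"
  proof (rule tendsto_sandwich[OF _ _ tendsto_const])
    show "\<forall>\<^sub>F n in sequentially. norm (partial_series a n (partial_series b n x - power_series b x))
        \<le> (\<Sum>k. \<bar>a k\<bar>) * norm (partial_series b n x - power_series b x)"
      using norm_partial_series_le[OF assms(1)] by simp
    show "(\<lambda>n. (\<Sum>k. \<bar>a k\<bar>) * norm (partial_series b n x - power_series b x)) \<longlonglongrightarrow> 0"
      using tendsto_mult_right_zero[OF tendsto_norm_zero[OF LIM_zero[OF partial_series_tendsto[OF assms(2)]]]] .
  qed simp
  then have "(\<lambda>n. partial_series a n (partial_series b n x - power_series b x)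
      + partial_series a n (power_series b x)) \<longlonglongrightarrow> 0 + power_series a (power_series b x)"
    by (intro tendsto_add partial_series_tendsto[OF assms(1)]) (rule tendsto_norm_zero_cancel)
  then show ?thesis
    by (simp add: partial_series_diff[OF assms(1)])
qed

lemma power_series_Cauchy_product:
  assumes a: "summable (\<lambda>k. \<bar>a k\<bar>)" and b: "summable (\<lambda>k. \<bar>b k\<bar>)"
  shows "(\<lambda>k. (\<Sum>i\<le>k. a i * b (k - i)) *\<^sub>R (P ^^ k) x) sums power_series a (power_series b x)"
proof -
  define g where "g = (\<lambda>(i, j). (a i * b j) *\<^sub>R (P ^^ (i + j)) x)"
  define h where "h = (\<lambda>(i, j). \<bar>a i\<bar> * \<bar>b j\<bar>)"
  define sq where "sq n = {..<n} \<times> {..<n}" for n :: nat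
  define tri where "tri n = {(i, j). i + j < n}" for n :: nat
  have tri_sq: "tri n \<subseteq> sq n" "finite (sq n)" for n
    by (auto simp: tri_def sq_def)
  let ?L = "(\<Sum>k. \<bar>a k\<bar>) * (\<Sum>k. \<bar>b k\<bar>)"
  have "(\<lambda>n. sum h (sq n)) \<longlonglongrightarrow> ?L"
    using tendsto_mult[OF summable_LIMSEQ[OF a] summable_LIMSEQ[OF b]]
    by (simp add: h_def sq_def sum_product sum.cartesian_product)
  moreover have "(\<lambda>n. sum h (tri n)) \<longlonglongrightarrow> ?L"
    using Cauchy_product_sums[of "\<lambda>k. \<bar>a k\<bar>" "\<lambda>k. \<bar>b k\<bar>"] a b
    by (simp add: sums_def h_def tri_def sum.triangle_reindex)
  ultimately have "(\<lambda>n. sum h (sq n) - sum h (tri n)) \<longlonglongrightarrow> ?L - ?L"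
    by (rule tendsto_diff)
  then have gap: "(\<lambda>n. (sum h (sq n) - sum h (tri n)) * norm x) \<longlonglongrightarrow> 0"
    by (simp add: tendsto_mult_left_zero)
  have "norm (sum g (sq n) - sum g (tri n)) \<le> (sum h (sq n) - sum h (tri n)) * norm x" for n
  proof -
    have "norm (sum g (sq n) - sum g (tri n)) = norm (sum g (sq n - tri n))"
      by (simp add: sum_diff tri_sq)
    also have "\<dots> \<le> (\<Sum>p\<in>sq n - tri n. h p * norm x)"
      by (rule order_trans[OF norm_sum sum_mono])
        (auto simp: g_def h_def abs_mult mult_left_mono norm_funpow_le)
    also have "\<dots> = (sum h (sq n) - sum h (tri n)) * norm x"
      by (simp add: sum_distrib_right[symmetric] sum_diff tri_sq left_diff_distrib)
    finally show ?thesis .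
  qed
  then have "(\<lambda>n. norm (sum g (sq n) - sum g (tri n))) \<longlonglongrightarrow> 0"
    by (intro tendsto_sandwich[OF _ _ tendsto_const gap]) auto
  then have "(\<lambda>n. sum g (sq n) - sum g (tri n)) \<longlonglongrightarrow> 0"
    by (rule tendsto_norm_zero_cancel)
  then have "(\<lambda>n. sum g (sq n) - (sum g (sq n) - sum g (tri n))) \<longlonglongrightarrow> power_series a (power_series b x) - 0"
    using partial_series_square_tendsto[OF a b, of x]
    by (intro tendsto_diff) (simp_all add: partial_series_square g_def sq_def)
  then show ?thesis
    by (simp add: sums_def partial_series_diagonal g_def tri_def)
qed

end

locale symmetric_contraction = contraction P for P :: "'a::{real_inner,complete_space} \<Rightarrow> 'a" +
  assumes symmetric: "inner (P x) y = inner x (P y)"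
begin

lemma funpow_symmetric: "inner ((P ^^ k) x) y = inner x ((P ^^ k) y)"
  by (induction k arbitrary: x y) (simp_all add: symmetric funpow_swap1)

lemma inner_power_series_sums:
  assumes "summable (\<lambda>k. \<bar>a k\<bar>)"
  shows "(\<lambda>k. a k * inner ((P ^^ k) x) y) sums inner (power_series a x) y"
  using bounded_linear.sums[OF bounded_linear_inner_left power_series_sums[OF assms]] by simp

lemma power_series_symmetric:
  assumes "summable (\<lambda>k. \<bar>a k\<bar>)"
  shows "inner (power_series a x) y = inner x (power_series a y)"
proof -
  have "inner ((P ^^ k) x) y = inner ((P ^^ k) y) x" for k
    by (metis funpow_symmetric inner_commute)
  then have "inner (power_series a x) y = inner (power_series a y) x"
    using inner_power_series_sums[OF assms, of x y] inner_power_series_sums[OF assms, of y x]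
    by (simp add: sums_unique2)
  then show ?thesis
    by (simp add: inner_commute)
qed

definition sqrt_id_minus :: "'a \<Rightarrow> 'a" where
  "sqrt_id_minus = power_series sqrt_coeff"

lemma bounded_linear_sqrt_id_minus: "bounded_linear sqrt_id_minus"
  unfolding sqrt_id_minus_def by (rule bounded_linear_power_series[OF summable_abs_sqrt_coeff])

lemma sqrt_id_minus_symmetric: "inner (sqrt_id_minus x) y = inner x (sqrt_id_minus y)"
  unfolding sqrt_id_minus_def by (rule power_series_symmetric[OF summable_abs_sqrt_coeff])

lemma sqrt_id_minus_commute:
  "bounded_linear C \<Longrightarrow> (\<And>x. C (P x) = P (C x)) \<Longrightarrow> C (sqrt_id_minus x) = sqrt_id_minus (C x)"
  unfolding sqrt_id_minus_def by (rule power_series_commute[OF summable_abs_sqrt_coeff])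

text \<open>All coefficients but the first are nonpositive and \<open>\<langle>P\<^sup>k x, x\<rangle> \<le> \<parallel>x\<parallel>\<^sup>2\<close>, so every
  partial sum of \<open>\<langle>sqrt_id_minus x, x\<rangle>\<close> is at least \<open>(\<Sum>k<n. sqrt_coeff k) \<parallel>x\<parallel>\<^sup>2 \<ge> 0\<close>.\<close>

lemma sqrt_id_minus_nonneg: "inner (sqrt_id_minus x) x \<ge> 0"
proof -
  have lim: "(\<lambda>n. \<Sum>k<n. sqrt_coeff k * inner ((P ^^ k) x) x) \<longlonglongrightarrow> inner (sqrt_id_minus x) x"
    using inner_power_series_sums[OF summable_abs_sqrt_coeff] by (simp add: sums_def sqrt_id_minus_def)
  have "(\<Sum>k<n. sqrt_coeff k) * (norm x)\<^sup>2 \<le> (\<Sum>k<n. sqrt_coeff k * inner ((P ^^ k) x) x)" for n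
    unfolding sum_distrib_right
  proof (rule sum_mono)
    fix k
    show "sqrt_coeff k * (norm x)\<^sup>2 \<le> sqrt_coeff k * inner ((P ^^ k) x) x"
    proof (cases "k = 0")
      case False
      have "inner ((P ^^ k) x) x \<le> norm ((P ^^ k) x) * norm x"
        by (rule norm_cauchy_schwarz)
      also have "\<dots> \<le> (norm x)\<^sup>2"
        using norm_funpow_le by (simp add: power2_eq_square mult_right_mono)
      finally show ?thesis
        using sqrt_coeff_nonpos[of k] False by (simp add: mult_left_mono_neg)
    qed (simp add: dot_square_norm)
  qed
  moreover have "(\<Sum>k<n. sqrt_coeff k) * (norm x)\<^sup>2 \<ge> 0" for n
    using sum_sqrt_coeff_nonneg by simp
  ultimately show ?thesis
    by (intro LIMSEQ_le_const[OF lim]) (meson order_trans)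
qed

lemma sqrt_id_minus_square: "sqrt_id_minus (sqrt_id_minus x) = x - P x"
proof (rule sums_unique2)
  show "(\<lambda>k. (\<Sum>i\<le>k. sqrt_coeff i * sqrt_coeff (k - i)) *\<^sub>R (P ^^ k) x) sums sqrt_id_minus (sqrt_id_minus x)"
    unfolding sqrt_id_minus_def
    by (rule power_series_Cauchy_product[OF summable_abs_sqrt_coeff summable_abs_sqrt_coeff])
  have "(\<lambda>k. if k = 0 then x else if k = 1 then - P x else 0) sums (\<Sum>k\<in>{0, 1::nat}. if k = 0 then x else if k = 1 then - P x else 0)"
    by (rule sums_finite) auto
  moreover have "(\<lambda>k. (\<Sum>i\<le>k. sqrt_coeff i * sqrt_coeff (k - i)) *\<^sub>R (P ^^ k) x)
      = (\<lambda>k. if k = 0 then x else if k = 1 then - P x else 0)"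
    by (simp add: fun_eq_iff sqrt_coeff_convolution)
  ultimately show "(\<lambda>k. (\<Sum>i\<le>k. sqrt_coeff i * sqrt_coeff (k - i)) *\<^sub>R (P ^^ k) x) sums (x - P x)"
    by simp
qed

end

section \<open>Coercive self-adjoint operators and their square roots\<close>

lemma lin_op_subspace: "lin_op D A \<Longrightarrow> subspace D"
  by (simp add: lin_op_def)

lemma lin_op_add: "lin_op D A \<Longrightarrow> x \<in> D \<Longrightarrow> y \<in> D \<Longrightarrow> A (x + y) = A x + A y"
  by (simp add: lin_op_def)

lemma lin_op_scale: "lin_op D A \<Longrightarrow> x \<in> D \<Longrightarrow> A (c *\<^sub>R x) = c *\<^sub>R A x"
  by (simp add: lin_op_def)

lemma lin_op_diff:
  assumes "lin_op D A" "x \<in> D" "y \<in> D"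
  shows "A (x - y) = A x - A y"
  using lin_op_add[OF assms(1,2), of "- y"] lin_op_scale[OF assms(1,3), of "-1"]
    lin_op_subspace[OF assms(1)] assms(3) by (simp add: subspace_neg)

lemma lin_op_0: "lin_op D A \<Longrightarrow> A 0 = 0"
  using lin_op_scale[of D A 0 0] by (simp add: lin_op_subspace subspace_0)

lemma subspace_image_lin_op:
  assumes "lin_op D A"
  shows "subspace (A ` D)"
  unfolding subspace_def
proof (intro conjI ballI allI)
  show "0 \<in> A ` D"
    using assms lin_op_0 lin_op_subspace subspace_0 by (metis image_eqI)
next
  fix x y assume "x \<in> A ` D" "y \<in> A ` D"
  then show "x + y \<in> A ` D"
    using assms by (auto simp: lin_op_add[symmetric] lin_op_subspace subspace_add)
next
  fix c :: real and x assume "x \<in> A ` D"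
  then show "c *\<^sub>R x \<in> A ` D"
    using assms by (auto simp: lin_op_scale[symmetric] lin_op_subspace subspace_scale)
qed

locale coercive_self_adjoint =
  fixes D :: "'a::{real_inner,complete_space} set" and A :: "'a \<Rightarrow> 'a" and \<omega> :: real
  assumes lin_op: "lin_op D A" and closed_op: "closed_op D A" and self_adjoint: "self_adjoint D A"
    and pos: "\<omega> > 0" and coercive: "\<forall>u\<in>D. inner (A u) u \<ge> \<omega> * (norm u)\<^sup>2"
begin

lemma subspace_dom: "subspace D"
  using lin_op by (rule lin_op_subspace)

lemma symmetric: "u \<in> D \<Longrightarrow> v \<in> D \<Longrightarrow> inner (A u) v = inner u (A v)"
  using self_adjoint by (simp add: self_adjoint_def)

lemma norm_le_norm_A:
  assumes "u \<in> D"
  shows "\<omega> * norm u \<le> norm (A u)"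
proof (cases "u = 0")
  case False
  have "(\<omega> * norm u) * norm u \<le> inner (A u) u"
    using coercive assms by (simp add: power2_eq_square mult.assoc)
  also have "\<dots> \<le> norm (A u) * norm u"
    by (rule norm_cauchy_schwarz)
  finally show ?thesis
    using False by simp
qed simp

lemma inj_on_dom: "inj_on A D"
proof (rule inj_onI)
  fix x y assume "x \<in> D" "y \<in> D" "A x = A y"
  then have "\<omega> * norm (x - y) \<le> 0"
    using norm_le_norm_A[of "x - y"] lin_op_diff[OF lin_op] subspace_dom by (simp add: subspace_diff)
  then show "x = y"
    using pos by (simp add: mult_le_0_iff)
qed

lemma closed_range: "closed (A ` D)"
proof (rule closed_sequential_limits[THEN iffD2], intro allI impI, elim conjE)
  fix y l assume y: "\<forall>n. y n \<in> A ` D" and "y \<longlonglongrightarrow> l"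
  have "\<forall>n. \<exists>v. v \<in> D \<and> y n = A v"
    using y by blast
  then obtain u where u: "\<And>n. u n \<in> D" "\<And>n. A (u n) = y n"
    by metis
  have "Cauchy u"
  proof (rule metric_CauchyI)
    fix e :: real assume "e > 0"
    then have "\<omega> * e > 0"
      using pos by simp
    then obtain N where N: "\<And>m n. m \<ge> N \<Longrightarrow> n \<ge> N \<Longrightarrow> dist (y m) (y n) < \<omega> * e"
      using metric_CauchyD[OF LIMSEQ_imp_Cauchy[OF \<open>y \<longlonglongrightarrow> l\<close>]] by blast
    have "dist (u m) (u n) < e" if "m \<ge> N" "n \<ge> N" for m n
    proof -
      have "\<omega> * dist (u m) (u n) \<le> dist (y m) (y n)"
        using norm_le_norm_A[of "u m - u n"] u subspace_dom lin_op_diff[OF lin_op]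
        by (simp add: dist_norm subspace_diff)
      then have "\<omega> * dist (u m) (u n) < \<omega> * e"
        using N[OF that] by linarith
      then show ?thesis
        using pos by simp
    qed
    then show "\<exists>N. \<forall>m\<ge>N. \<forall>n\<ge>N. dist (u m) (u n) < e" by blast
  qed
  then obtain x where "u \<longlonglongrightarrow> x"
    using Cauchy_convergent_iff convergent_def by blast
  have "closed {(x, A x) | x. x \<in> D}"
    using closed_op by (simp add: closed_op_def)
  moreover have "(u n, A (u n)) \<in> {(x, A x) | x. x \<in> D}" for n
    using u(1) by blast
  moreover have "(\<lambda>n. (u n, A (u n))) \<longlonglongrightarrow> (x, l)"
    using \<open>u \<longlonglongrightarrow> x\<close> \<open>y \<longlonglongrightarrow> l\<close> u(2) by (simp add: tendsto_Pair)
  ultimately have "(x, l) \<in> {(x, A x) | x. x \<in> D}"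
    by (rule closed_sequentially)
  then show "l \<in> A ` D" by auto
qed

lemma image_eq_UNIV: "A ` D = UNIV"
proof -
  have "closure (A ` D) = UNIV"
  proof (rule dense_if_orthogonal_trivial[OF subspace_image_lin_op[OF lin_op]])
    fix v assume v: "\<And>m. m \<in> A ` D \<Longrightarrow> inner v m = 0"
    have "\<forall>u\<in>D. inner (A u) v = inner u 0"
      using v by (simp add: inner_commute[of "A _"])
    then have "v \<in> adj_dom D A"
      unfolding adj_dom_def by blast
    then have "v \<in> D"
      using self_adjoint by (simp add: self_adjoint_def)
    then have "\<omega> * (norm v)\<^sup>2 \<le> inner (A v) v"
      using coercive by blast
    also have "inner (A v) v = 0"
      using v[of "A v"] \<open>v \<in> D\<close> by (simp add: inner_commute)
    finally have "\<omega> * (norm v)\<^sup>2 \<le> 0" .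
    then show "v = 0"
      using pos by (simp add: mult_le_0_iff)
  qed
  then show ?thesis
    using closed_range by simp
qed

abbreviation Ainv :: "'a \<Rightarrow> 'a" where
  "Ainv \<equiv> inv_into D A"

lemma Ainv_mem: "Ainv x \<in> D"
  using image_eq_UNIV by (metis UNIV_I inv_into_into)

lemma A_Ainv: "A (Ainv x) = x"
  using image_eq_UNIV by (metis UNIV_I f_inv_into_f)

lemma Ainv_A: "u \<in> D \<Longrightarrow> Ainv (A u) = u"
  using inj_on_dom by (rule inv_into_f_f)

lemma Ainv_eqI: "u \<in> D \<Longrightarrow> A u = x \<Longrightarrow> Ainv x = u"
  using Ainv_A by blast

lemma bounded_linear_Ainv: "bounded_linear Ainv"
proof (rule bounded_linear_intro[where K = "1 / \<omega>"])
  show "Ainv (x + y) = Ainv x + Ainv y" for x y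
    using Ainv_mem A_Ainv subspace_dom by (intro Ainv_eqI) (simp_all add: lin_op_add[OF lin_op] subspace_add)
  show "Ainv (c *\<^sub>R x) = c *\<^sub>R Ainv x" for c x
    using Ainv_mem A_Ainv subspace_dom by (intro Ainv_eqI) (simp_all add: lin_op_scale[OF lin_op] subspace_scale)
  show "norm (Ainv x) \<le> norm x * (1 / \<omega>)" for x
    using norm_le_norm_A[OF Ainv_mem, of x] pos by (simp add: A_Ainv field_simps)
qed

lemma Ainv_symmetric: "inner (Ainv x) y = inner x (Ainv y)"
  using symmetric[OF Ainv_mem Ainv_mem, of x y] by (simp add: A_Ainv)

lemma Ainv_coercive: "\<omega> * (norm (Ainv x))\<^sup>2 \<le> inner (Ainv x) x"
proof -
  have "\<omega> * (norm (Ainv x))\<^sup>2 \<le> inner (A (Ainv x)) (Ainv x)"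
    using coercive Ainv_mem by blast
  then show ?thesis
    by (simp add: A_Ainv inner_commute)
qed

lemma norm_le_if_norm_square_eq_inner_Ainv:
  assumes "(norm z)\<^sup>2 = inner (Ainv x) x"
  shows "norm z \<le> norm x * (1 / sqrt \<omega>)"
proof -
  have "(norm z)\<^sup>2 \<le> norm (Ainv x) * norm x"
    using assms by (simp add: norm_cauchy_schwarz)
  also have "\<dots> \<le> (norm x / \<omega>) * norm x"
    using norm_le_norm_A[OF Ainv_mem, of x] pos
    by (intro mult_right_mono) (simp_all add: A_Ainv field_simps)
  also have "\<dots> = (norm x * (1 / sqrt \<omega>))\<^sup>2"
    using pos by (simp add: power2_eq_square field_simps)
  finally show ?thesis
    using pos by (simp add: power2_le_iff_abs_le)
qed

text \<open>Since \<open>0 < \<omega> A\<inverse> \<le> 1\<close>, the operator \<open>I - \<omega> A\<inverse>\<close> is a symmetric contraction and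
  \<open>A\<inverse> = (I - (I - \<omega> A\<inverse>)) / \<omega>\<close> has the square root \<open>sqrt (I - (I - \<omega> A\<inverse>)) / sqrt \<omega>\<close>.\<close>

sublocale shift: symmetric_contraction "\<lambda>x. x - \<omega> *\<^sub>R Ainv x"
proof (intro symmetric_contraction.intro contraction.intro symmetric_contraction_axioms.intro)
  show "bounded_linear (\<lambda>x. x - \<omega> *\<^sub>R Ainv x)"
    by (intro bounded_linear_sub bounded_linear_ident
        bounded_linear_compose[OF bounded_linear_scaleR_right bounded_linear_Ainv])
  show "inner (x - \<omega> *\<^sub>R Ainv x) y = inner x (y - \<omega> *\<^sub>R Ainv y)" for x y
    by (simp add: inner_diff_left inner_diff_right Ainv_symmetric)
  show "norm (x - \<omega> *\<^sub>R Ainv x) \<le> norm x" for x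
  proof -
    have "(norm (x - \<omega> *\<^sub>R Ainv x))\<^sup>2
        = (norm x)\<^sup>2 - \<omega> * (2 * inner (Ainv x) x - \<omega> * (norm (Ainv x))\<^sup>2)"
      unfolding power2_norm_eq_inner
      by (simp add: inner_diff_left inner_diff_right inner_commute[of x "Ainv x"] algebra_simps)
    also have "\<dots> \<le> (norm x)\<^sup>2"
    proof -
      have "0 \<le> \<omega> * (norm (Ainv x))\<^sup>2"
        using pos by simp
      then have "0 \<le> 2 * inner (Ainv x) x - \<omega> * (norm (Ainv x))\<^sup>2"
        using Ainv_coercive[of x] by linarith
      then show ?thesis
        using pos by simp
    qed
    finally show ?thesis
      by (simp add: power2_le_iff_abs_le)
  qed
qed

definition sqrt_Ainv :: "'a \<Rightarrow> 'a" where
  "sqrt_Ainv x = (1 / sqrt \<omega>) *\<^sub>R shift.sqrt_id_minus x"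

lemma bounded_linear_sqrt_Ainv: "bounded_linear sqrt_Ainv"
  unfolding sqrt_Ainv_def
  by (rule bounded_linear_compose[OF bounded_linear_scaleR_right shift.bounded_linear_sqrt_id_minus])

lemma linear_sqrt_Ainv: "linear sqrt_Ainv"
  using bounded_linear_sqrt_Ainv by (rule bounded_linear.linear)

lemma sqrt_Ainv_symmetric: "inner (sqrt_Ainv x) y = inner x (sqrt_Ainv y)"
  by (simp add: sqrt_Ainv_def shift.sqrt_id_minus_symmetric)

lemma sqrt_Ainv_nonneg: "inner (sqrt_Ainv x) x \<ge> 0"
  using shift.sqrt_id_minus_nonneg[of x] pos by (simp add: sqrt_Ainv_def)

lemma sqrt_Ainv_square: "sqrt_Ainv (sqrt_Ainv x) = Ainv x"
  using pos linear_scale[OF bounded_linear.linear[OF shift.bounded_linear_sqrt_id_minus]]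
  by (simp add: sqrt_Ainv_def shift.sqrt_id_minus_square)

lemma sqrt_Ainv_commute:
  assumes "bounded_linear C" "\<And>x. C (Ainv x) = Ainv (C x)"
  shows "C (sqrt_Ainv x) = sqrt_Ainv (C x)"
proof -
  have "C (x - \<omega> *\<^sub>R Ainv x) = C x - \<omega> *\<^sub>R Ainv (C x)" for x
    using assms by (simp add: bounded_linear.linear linear_diff linear_scale)
  then show ?thesis
    using shift.sqrt_id_minus_commute[OF assms(1)] assms(1)
    by (simp add: sqrt_Ainv_def bounded_linear.linear linear_scale)
qed

text \<open>Uniqueness of the nonnegative square root: a competitor C commutes with \<open>C\<^sup>2 = A\<inverse>\<close>,
  hence with \<open>sqrt_Ainv\<close>, and on \<open>y = sqrt_Ainv x - C x\<close> both square roots vanish.\<close>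

lemma sqrt_Ainv_unique:
  assumes C: "bounded_linear C" and sym: "\<And>x y. inner (C x) y = inner x (C y)"
    and nonneg: "\<And>x. inner (C x) x \<ge> 0" and square: "\<And>x. C (C x) = Ainv x"
  shows "C x = sqrt_Ainv x"
proof -
  have lin: "linear C"
    using C by (rule bounded_linear.linear)
  have commute: "sqrt_Ainv (C y) = C (sqrt_Ainv y)" for y
    using sqrt_Ainv_commute[OF C] square by metis
  define y where "y = sqrt_Ainv x - C x"
  have "sqrt_Ainv y + C y = 0"
    using commute[of x] lin linear_sqrt_Ainv
    by (simp add: y_def linear_diff sqrt_Ainv_square square)
  then have "inner (sqrt_Ainv y) y + inner (C y) y = 0"
    by (simp add: inner_add_left[symmetric])
  then have "inner (sqrt_Ainv y) y = 0" "inner (C y) y = 0"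
    using sqrt_Ainv_nonneg[of y] nonneg[of y] by linarith+
  then have "sqrt_Ainv y = 0" "C y = 0"
    using nonneg_symmetric_inner_zero[OF linear_sqrt_Ainv sqrt_Ainv_symmetric sqrt_Ainv_nonneg]
      nonneg_symmetric_inner_zero[OF lin sym nonneg] by blast+
  then have "inner y y = 0"
    by (simp add: y_def inner_diff_left sqrt_Ainv_symmetric sym)
  then show ?thesis
    by (simp add: y_def)
qed

lemma inj_sqrt_Ainv: "inj sqrt_Ainv"
proof (rule injI)
  fix x y assume "sqrt_Ainv x = sqrt_Ainv y"
  then have "Ainv x = Ainv y"
    by (metis sqrt_Ainv_square)
  then show "x = y"
    by (metis A_Ainv)
qed

definition sqrt_A :: "'a \<Rightarrow> 'a" where
  "sqrt_A u = (if u \<in> range sqrt_Ainv then inv_into UNIV sqrt_Ainv u else 0)"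

lemma sqrt_A_sqrt_Ainv [simp]: "sqrt_A (sqrt_Ainv x) = x"
  using inj_sqrt_Ainv by (simp add: sqrt_A_def)

lemma subspace_range_sqrt_Ainv: "subspace (range sqrt_Ainv)"
  using linear_sqrt_Ainv subspace_UNIV by (rule linear_subspace_image)

lemma dense_range_sqrt_Ainv: "closure (range sqrt_Ainv) = UNIV"
proof (rule dense_if_orthogonal_trivial[OF subspace_range_sqrt_Ainv])
  fix x assume "\<And>m. m \<in> range sqrt_Ainv \<Longrightarrow> inner x m = 0"
  then have "inner (sqrt_Ainv x) (sqrt_Ainv x) = 0"
    by (simp add: sqrt_Ainv_symmetric)
  then show "x = 0"
    using inj_sqrt_Ainv linear_sqrt_Ainv by (simp add: linear_inj_iff_eq_0)
qed

lemma lin_op_sqrt_A: "lin_op (range sqrt_Ainv) sqrt_A"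
  unfolding lin_op_def
  using subspace_range_sqrt_Ainv linear_sqrt_Ainv
  by (auto simp: linear_add[symmetric] linear_scale[symmetric] simp del: linear_add linear_scale)

lemma closed_op_sqrt_A: "closed_op (range sqrt_Ainv) sqrt_A"
proof -
  have "{(x, sqrt_A x) | x. x \<in> range sqrt_Ainv} = {p. fst p = sqrt_Ainv (snd p)}"
    by auto
  moreover have "closed {p. fst p = sqrt_Ainv (snd p)}"
    by (intro closed_Collect_eq continuous_intros
        bounded_linear.continuous_on[OF bounded_linear_sqrt_Ainv])
  ultimately show ?thesis
    by (simp add: closed_op_def)
qed

lemma self_adjoint_sqrt_A: "self_adjoint (range sqrt_Ainv) sqrt_A"
  unfolding self_adjoint_def
proof (intro conjI ballI)
  show "adj_dom (range sqrt_Ainv) sqrt_A = range sqrt_Ainv"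
  proof (intro equalityI subsetI)
    fix v assume "v \<in> adj_dom (range sqrt_Ainv) sqrt_A"
    then obtain w where "\<forall>u\<in>range sqrt_Ainv. inner (sqrt_A u) v = inner u w"
      unfolding adj_dom_def by blast
    then have "inner y v = inner y (sqrt_Ainv w)" for y
      by (metis rangeI sqrt_A_sqrt_Ainv sqrt_Ainv_symmetric)
    then have "inner y (v - sqrt_Ainv w) = 0" for y
      by (simp add: inner_diff_right)
    then show "v \<in> range sqrt_Ainv"
      by (metis eq_iff_diff_eq_0 inner_eq_zero_iff rangeI)
  next
    fix v assume "v \<in> range sqrt_Ainv"
    then show "v \<in> adj_dom (range sqrt_Ainv) sqrt_A"
      by (auto simp: adj_dom_def sqrt_Ainv_symmetric)
  qed
qed (auto simp: sqrt_Ainv_symmetric)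

lemma is_sqrt_op_sqrt_A: "is_sqrt_op D A (range sqrt_Ainv) sqrt_A"
  unfolding is_sqrt_op_def
proof (intro conjI ballI allI impI)
  show "densely_defined (range sqrt_Ainv)"
    using dense_range_sqrt_Ainv by (simp add: densely_defined_def)
  show "inner (sqrt_A u) u \<ge> 0" if "u \<in> range sqrt_Ainv" for u
    using that sqrt_Ainv_nonneg by (auto simp: inner_commute)
  show "sqrt_A u = 0" if "u \<notin> range sqrt_Ainv" for u
    using that by (simp add: sqrt_A_def)
  show "{u \<in> range sqrt_Ainv. sqrt_A u \<in> range sqrt_Ainv} = D"
  proof (intro equalityI subsetI)
    fix u assume "u \<in> {u \<in> range sqrt_Ainv. sqrt_A u \<in> range sqrt_Ainv}"
    then obtain y where "u = sqrt_Ainv (sqrt_Ainv y)"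
      by auto
    then show "u \<in> D"
      by (simp add: sqrt_Ainv_square Ainv_mem)
  next
    fix u assume "u \<in> D"
    then have "u = sqrt_Ainv (sqrt_Ainv (A u))"
      by (simp add: sqrt_Ainv_square Ainv_A)
    then show "u \<in> {u \<in> range sqrt_Ainv. sqrt_A u \<in> range sqrt_Ainv}"
      by (metis (mono_tags, lifting) mem_Collect_eq rangeI sqrt_A_sqrt_Ainv)
  qed
  show "sqrt_A (sqrt_A u) = A u" if "u \<in> D" for u
    using that by (metis sqrt_A_sqrt_Ainv sqrt_Ainv_square Ainv_A)
qed (fact lin_op_sqrt_A closed_op_sqrt_A self_adjoint_sqrt_A)+

lemma bij_betw_sqrt_op:
  assumes "is_sqrt_op D A DT T"
  shows "bij_betw T DT UNIV"
proof -
  have lin: "lin_op DT T" and dom: "{u \<in> DT. T u \<in> DT} = D" and square: "\<forall>u\<in>D. T (T u) = A u"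
    using assms by (auto simp: is_sqrt_op_def)
  have "inj_on T DT"
  proof (rule inj_onI)
    fix x y assume "x \<in> DT" "y \<in> DT" "T x = T y"
    then have "T (x - y) = 0" "x - y \<in> DT"
      using lin_op_diff[OF lin] lin_op_subspace[OF lin] by (auto simp: subspace_diff)
    moreover have "0 \<in> DT"
      using lin_op_subspace[OF lin] by (rule subspace_0)
    ultimately have "x - y \<in> {u \<in> DT. T u \<in> DT}"
      by simp
    then have "x - y \<in> D"
      using dom by simp
    then have "A (x - y) = T (T (x - y))"
      using square by simp
    also have "\<dots> = 0"
      using \<open>T (x - y) = 0\<close> lin_op_0[OF lin] by simp
    finally have "x - y = Ainv 0"
      using Ainv_A[OF \<open>x - y \<in> D\<close>] by simp
    then show "x = y"
      using linear_0[OF bounded_linear.linear[OF bounded_linear_Ainv]] by simp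
  qed
  moreover have "y \<in> T ` DT" for y
  proof -
    have "Ainv y \<in> {u \<in> DT. T u \<in> DT}"
      using dom Ainv_mem by simp
    then have "T (Ainv y) \<in> DT"
      by simp
    moreover have "T (T (Ainv y)) = y"
      using square Ainv_mem A_Ainv by simp
    ultimately show ?thesis
      by (metis imageI)
  qed
  ultimately show ?thesis
    by (auto simp: bij_betw_def)
qed

text \<open>The inverse of any square root of A is a bounded nonnegative square root of A\<inverse>.\<close>

lemma inv_sqrt_op_eq_sqrt_Ainv:
  assumes sqrt: "is_sqrt_op D A DT T"
  shows "inv_into DT T x = sqrt_Ainv x"
proof -
  have lin: "lin_op DT T" and sym: "\<And>u v. u \<in> DT \<Longrightarrow> v \<in> DT \<Longrightarrow> inner (T u) v = inner u (T v)"
    and nonneg: "\<And>u. u \<in> DT \<Longrightarrow> inner (T u) u \<ge> 0"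
    and dom: "{u \<in> DT. T u \<in> DT} = D" and square: "\<forall>u\<in>D. T (T u) = A u"
    using sqrt by (auto simp: is_sqrt_op_def self_adjoint_def)
  define C where "C = inv_into DT T"
  have bij: "bij_betw T DT UNIV"
    using sqrt by (rule bij_betw_sqrt_op)
  have C: "C y \<in> DT" "T (C y) = y" for y
    using bij unfolding C_def bij_betw_def by (metis UNIV_I inv_into_into f_inv_into_f)+
  have C_eqI: "C y = u" if "u \<in> DT" "T u = y" for u y
    using bij that unfolding C_def bij_betw_def by (metis inv_into_f_f)
  have C_symmetric: "inner (C x) y = inner x (C y)" for x y
    using sym[OF C(1) C(1), of x y] by (simp add: C(2))
  have C_square: "C (C y) = Ainv y" for y
  proof -
    have "Ainv y \<in> DT" "T (Ainv y) \<in> DT" "T (T (Ainv y)) = y"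
      using dom square Ainv_mem A_Ainv by auto
    then show ?thesis
      by (metis C_eqI)
  qed
  have "bounded_linear C"
  proof (rule bounded_linear_intro[where K = "1 / sqrt \<omega>"])
    show "C (x + y) = C x + C y" for x y
      using C lin_op_subspace[OF lin] by (intro C_eqI) (simp_all add: lin_op_add[OF lin] subspace_add)
    show "C (r *\<^sub>R x) = r *\<^sub>R C x" for r x
      using C lin_op_subspace[OF lin] by (intro C_eqI) (simp_all add: lin_op_scale[OF lin] subspace_scale)
    show "norm (C x) \<le> norm x * (1 / sqrt \<omega>)" for x
      by (rule norm_le_if_norm_square_eq_inner_Ainv)
        (simp add: dot_square_norm[symmetric] C_symmetric C_square inner_commute)
  qed
  moreover have "inner (C x) x \<ge> 0" for x
    using nonneg[OF C(1), of x] by (simp add: C(2) inner_commute)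
  ultimately have "C x = sqrt_Ainv x"
    using sqrt_Ainv_unique C_symmetric C_square by blast
  then show ?thesis
    by (simp add: C_def)
qed

lemma is_sqrt_op_unique:
  assumes sqrt: "is_sqrt_op D A DT T"
  shows "DT = range sqrt_Ainv" "T = sqrt_A"
proof -
  have bij: "bij_betw T DT UNIV"
    using sqrt by (rule bij_betw_sqrt_op)
  have inv: "inv_into DT T = sqrt_Ainv"
    using inv_sqrt_op_eq_sqrt_Ainv[OF sqrt] by blast
  have surj: "T ` DT = UNIV" and inj: "inj_on T DT"
    using bij by (simp_all add: bij_betw_def)
  have T_inv: "T (sqrt_Ainv y) = y" for y
    unfolding inv[symmetric] by (rule f_inv_into_f) (simp add: surj)
  show DT: "DT = range sqrt_Ainv"
  proof (intro equalityI subsetI)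
    show "u \<in> range sqrt_Ainv" if "u \<in> DT" for u
      using inv_into_f_f[OF inj that] by (metis inv rangeI)
    show "u \<in> DT" if u: "u \<in> range sqrt_Ainv" for u
    proof -
      obtain y where "u = sqrt_Ainv y"
        using u by blast
      then show ?thesis
        by (simp add: inv[symmetric] inv_into_into surj)
    qed
  qed
  show "T = sqrt_A"
  proof
    fix u
    show "T u = sqrt_A u"
    proof (cases "u \<in> range sqrt_Ainv")
      case True
      then obtain y where "u = sqrt_Ainv y"
        by blast
      then show ?thesis
        by (simp add: T_inv)
    next
      case False
      then show ?thesis
        using sqrt DT by (simp add: is_sqrt_op_def sqrt_A_def)
    qed
  qed
qed

lemma sqrt_dom_eq: "sqrt_dom D A = range sqrt_Ainv"
  and sqrt_op_eq: "sqrt_op D A = sqrt_A"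
proof -
  have "sqrt_pair D A = (range sqrt_Ainv, sqrt_A)"
    unfolding sqrt_pair_def
  proof (rule the_equality)
    show "is_sqrt_op D A (fst (range sqrt_Ainv, sqrt_A)) (snd (range sqrt_Ainv, sqrt_A))"
      using is_sqrt_op_sqrt_A by simp
  next
    fix p assume "is_sqrt_op D A (fst p) (snd p)"
    then show "p = (range sqrt_Ainv, sqrt_A)"
      using is_sqrt_op_unique by (simp add: prod_eq_iff)
  qed
  then show "sqrt_dom D A = range sqrt_Ainv" "sqrt_op D A = sqrt_A"
    by (simp_all add: sqrt_dom_def sqrt_op_def)
qed

lemma bounded_comp_Ainv_iff:
  assumes lin: "lin_op DS S"
  shows "(D \<subseteq> DS \<and> (\<exists>c>0. \<forall>u\<in>D. norm (S u) \<le> c * norm (A u)))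
    \<longleftrightarrow> (\<forall>x. Ainv x \<in> DS) \<and> bounded_linear (\<lambda>x. S (Ainv x))"
proof
  assume "D \<subseteq> DS \<and> (\<exists>c>0. \<forall>u\<in>D. norm (S u) \<le> c * norm (A u))"
  then obtain c where dom: "D \<subseteq> DS" and bound: "\<forall>u\<in>D. norm (S u) \<le> c * norm (A u)"
    by blast
  have mem: "Ainv x \<in> DS" for x
    using dom Ainv_mem by blast
  have "bounded_linear (\<lambda>x. S (Ainv x))"
  proof (rule bounded_linear_intro[where K = c])
    show "S (Ainv (x + y)) = S (Ainv x) + S (Ainv y)" for x y
      using bounded_linear.linear[OF bounded_linear_Ainv] lin_op_add[OF lin mem mem]
      by (simp add: linear_add)
    show "S (Ainv (r *\<^sub>R x)) = r *\<^sub>R S (Ainv x)" for r x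
      using bounded_linear.linear[OF bounded_linear_Ainv] lin_op_scale[OF lin mem]
      by (simp add: linear_scale)
    show "norm (S (Ainv x)) \<le> norm x * c" for x
      using bound Ainv_mem[of x] A_Ainv[of x] by (metis mult.commute)
  qed
  then show "(\<forall>x. Ainv x \<in> DS) \<and> bounded_linear (\<lambda>x. S (Ainv x))"
    using mem by blast
next
  assume "(\<forall>x. Ainv x \<in> DS) \<and> bounded_linear (\<lambda>x. S (Ainv x))"
  then obtain K where mem: "\<And>x. Ainv x \<in> DS" and K: "K > 0" "\<And>x. norm (S (Ainv x)) \<le> norm x * K"
    using bounded_linear.pos_bounded by blast
  have "D \<subseteq> DS"
    using mem Ainv_A by (metis subsetI)
  moreover have "\<forall>u\<in>D. norm (S u) \<le> K * norm (A u)"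
    using K(2) Ainv_A by (metis mult.commute)
  ultimately show "D \<subseteq> DS \<and> (\<exists>c>0. \<forall>u\<in>D. norm (S u) \<le> c * norm (A u))"
    using K(1) by blast
qed

lemma ball_dom_iff: "(\<forall>u\<in>D. P u) \<longleftrightarrow> (\<forall>y. P (Ainv y))"
  by (metis Ainv_A Ainv_mem)

lemma inner_Ainv_eq_norm_sqrt_Ainv: "inner y (Ainv y) = (norm (sqrt_Ainv y))\<^sup>2"
  by (simp add: dot_square_norm[symmetric] sqrt_Ainv_symmetric sqrt_Ainv_square)

text \<open>The weak characterisation of \<open>D(A\<^sup>1\<^sup>/\<^sup>2)\<close>: a functional bounded by \<open>K \<parallel>A\<^sup>-\<^sup>1\<^sup>/\<^sup>2 y\<parallel>\<close>
  is represented, through Riesz on the dense range of \<open>A\<^sup>-\<^sup>1\<^sup>/\<^sup>2\<close>, by \<open>A\<^sup>1\<^sup>/\<^sup>2 v\<close>.\<close>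

lemma range_sqrt_Ainv_norm_le_iff:
  assumes K: "K \<ge> 0"
  shows "(\<forall>y. \<bar>inner y v\<bar> \<le> K * norm (sqrt_Ainv y)) \<longleftrightarrow> v \<in> range sqrt_Ainv \<and> norm (sqrt_A v) \<le> K"
proof
  assume bound: "\<forall>y. \<bar>inner y v\<bar> \<le> K * norm (sqrt_Ainv y)"
  have "\<exists>w. \<forall>z\<in>range sqrt_Ainv. inner (sqrt_A z) v = inner z w"
  proof (rule riesz_representation_subspace[OF subspace_range_sqrt_Ainv])
    show "inner (sqrt_A (x + y)) v = inner (sqrt_A x) v + inner (sqrt_A y) v"
      if "x \<in> range sqrt_Ainv" "y \<in> range sqrt_Ainv" for x y
      using lin_op_add[OF lin_op_sqrt_A that] by (simp add: inner_add_left)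
    show "inner (sqrt_A (c *\<^sub>R x)) v = c * inner (sqrt_A x) v" if "x \<in> range sqrt_Ainv" for c x
      using lin_op_scale[OF lin_op_sqrt_A that] by simp
    show "\<bar>inner (sqrt_A x) v\<bar> \<le> K * norm x" if "x \<in> range sqrt_Ainv" for x
      using that bound by auto
  qed blast
  then obtain w where w: "\<And>y. inner y v = inner (sqrt_Ainv y) w"
    by (metis rangeI sqrt_A_sqrt_Ainv)
  have "inner y (v - sqrt_Ainv w) = 0" for y
    using w[of y] by (simp add: inner_diff_right sqrt_Ainv_symmetric)
  then have v: "v = sqrt_Ainv w"
    by (metis eq_iff_diff_eq_0 inner_eq_zero_iff)
  have "norm w \<le> K"
  proof (rule norm_le_if_inner_bounded_on_dense[OF dense_range_sqrt_Ainv _ K])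
    show "\<bar>inner z w\<bar> \<le> K * norm z" if "z \<in> range sqrt_Ainv" for z
      using that bound w by auto
  qed
  then show "v \<in> range sqrt_Ainv \<and> norm (sqrt_A v) \<le> K"
    using v by simp
next
  assume "v \<in> range sqrt_Ainv \<and> norm (sqrt_A v) \<le> K"
  then obtain w where v: "v = sqrt_Ainv w" and "norm w \<le> K"
    by auto
  have "\<bar>inner y v\<bar> \<le> norm (sqrt_Ainv y) * norm w" for y
    using Cauchy_Schwarz_ineq2[of "sqrt_Ainv y" w] by (simp add: v sqrt_Ainv_symmetric)
  also have "\<dots> y \<le> K * norm (sqrt_Ainv y)" for y
    using mult_right_mono[OF \<open>norm w \<le> K\<close> norm_ge_zero[of "sqrt_Ainv y"]]
    by (metis mult.commute)
  finally show "\<forall>y. \<bar>inner y v\<bar> \<le> K * norm (sqrt_Ainv y)"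
    by blast
qed

lemma sqrt_dom_norm_le_iff:
  assumes "K \<ge> 0"
  shows "(\<forall>u\<in>D. \<bar>inner (A u) v\<bar> \<le> K * sqrt (inner (A u) u))
    \<longleftrightarrow> v \<in> sqrt_dom D A \<and> norm (sqrt_op D A v) \<le> K"
  using range_sqrt_Ainv_norm_le_iff[OF assms, of v]
  by (simp add: ball_dom_iff[of "\<lambda>u. \<bar>inner (A u) v\<bar> \<le> K * sqrt (inner (A u) u)"] A_Ainv
      inner_Ainv_eq_norm_sqrt_Ainv sqrt_dom_eq sqrt_op_eq)

lemma sqrt_dom_weighted_norm_le_iff:
  assumes "\<And>v. g v \<ge> 0"
  shows "(\<exists>c>0. \<forall>v\<in>V. v \<in> sqrt_dom D A \<and> norm (sqrt_op D A v) \<le> c * g v)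
    \<longleftrightarrow> (\<exists>c>0. \<forall>u\<in>D. \<forall>v\<in>V. \<bar>inner (A u) v\<bar> \<le> c * g v * sqrt (inner (A u) u))"
proof (intro ex_cong1 conj_cong refl)
  fix c :: real assume "c > 0"
  then have "(v \<in> sqrt_dom D A \<and> norm (sqrt_op D A v) \<le> c * g v)
      \<longleftrightarrow> (\<forall>u\<in>D. \<bar>inner (A u) v\<bar> \<le> c * g v * sqrt (inner (A u) u))" for v
    using sqrt_dom_norm_le_iff[of "c * g v" v] assms[of v] by simp
  then show "(\<forall>v\<in>V. v \<in> sqrt_dom D A \<and> norm (sqrt_op D A v) \<le> c * g v)
      \<longleftrightarrow> (\<forall>u\<in>D. \<forall>v\<in>V. \<bar>inner (A u) v\<bar> \<le> c * g v * sqrt (inner (A u) u))"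
    by blast
qed

end

theorem lemma3p1:
  fixes D1 D2 :: "'a::{real_inner, complete_space} set"
    and A1 A2 :: "'a \<Rightarrow> 'a"
    and \<omega>1 \<omega>2 :: real
  assumes "lin_op D1 A1" "densely_defined D1" "closed_op D1 A1" "self_adjoint D1 A1"
    and "lin_op D2 A2" "densely_defined D2" "closed_op D2 A2" "self_adjoint D2 A2"
    and "\<omega>1 > 0" "\<forall>u\<in>D1. inner (A1 u) u \<ge> \<omega>1 * (norm u)\<^sup>2"
    and "\<omega>2 > 0" "\<forall>u\<in>D2. inner (A2 u) u \<ge> \<omega>2 * (norm u)\<^sup>2"
  shows "((D2 \<subseteq> sqrt_dom D1 A1 \<and>
            (\<exists>c>0. \<forall>u\<in>D2. norm (sqrt_op D1 A1 u) \<le> c * norm (A2 u)))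
          \<longleftrightarrow> ((\<forall>x. inv_into D2 A2 x \<in> sqrt_dom D1 A1) \<and>
               bounded_linear (\<lambda>x. sqrt_op D1 A1 (inv_into D2 A2 x))))
       \<and> ((D2 \<subseteq> sqrt_dom D1 A1 \<and>
            (\<exists>c>0. \<forall>u\<in>D2. norm (sqrt_op D1 A1 u) \<le> c * norm (A2 u)))
          \<longleftrightarrow> (\<exists>c>0. \<forall>u\<in>D1. \<forall>v\<in>D2.
                 \<bar>inner (A1 u) v\<bar> \<le> c * norm (A2 v) * sqrt (inner (A1 u) u)))"
proof -
  interpret A1: coercive_self_adjoint D1 A1 \<omega>1
    using assms by (simp add: coercive_self_adjoint_def)
  interpret A2: coercive_self_adjoint D2 A2 \<omega>2
    using assms by (simp add: coercive_self_adjoint_def)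
  have lin: "lin_op (sqrt_dom D1 A1) (sqrt_op D1 A1)"
    using A1.lin_op_sqrt_A by (simp add: A1.sqrt_dom_eq A1.sqrt_op_eq)
  have "(D2 \<subseteq> sqrt_dom D1 A1 \<and> (\<exists>c>0. \<forall>u\<in>D2. norm (sqrt_op D1 A1 u) \<le> c * norm (A2 u)))
      \<longleftrightarrow> (\<exists>c>0. \<forall>v\<in>D2. v \<in> sqrt_dom D1 A1 \<and> norm (sqrt_op D1 A1 v) \<le> c * norm (A2 v))"
    by (auto intro: exI[of _ 1])
  also have "\<dots> \<longleftrightarrow> (\<exists>c>0. \<forall>u\<in>D1. \<forall>v\<in>D2.
      \<bar>inner (A1 u) v\<bar> \<le> c * norm (A2 v) * sqrt (inner (A1 u) u))"
    by (rule A1.sqrt_dom_weighted_norm_le_iff) simp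
  finally show ?thesis
    using A2.bounded_comp_Ainv_iff[OF lin] by blast
qed

end
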